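(* Let $S$ be an inductive $E$-demigroup with associated function $\cdot:S\times E\to E$. Then $C^d_E(S)$ is an inductive constellation, and for all $(f,s)\in C^d_E(S)$ and $e\in E$ the co-restriction is $$(f,s)|(e,e)=\big(f\wedge(s\cdot e),\,(f\wedge(s\cdot e))s\big),$$ where $\wedge$ is the meet in $(E,\le_r)$.
   Context: For a semigroup $S$, $E(S)$ is its set of idempotents; for $e,f\in E(S)$, $e\le_r f$ iff $e=ef$. $E\subseteq E(S)$ is right pre-reduced if $e=ef$ and $f=fe$ imply $e=f$ for $e,f\in E$. A demigroup is a semigroup $S$ with unary $d$ such that $d(x)\in E(S)$, $d(x)x=x$, $d(xy)=d(xd(y))$ for all $x,y$. For $E\subseteq E(S)$, $S$ is an $E$-demigroup if $d(s)\in E$ for all $s$ and $ed(e)=e$ for all $e\in E$. It is inductive if $E$ is right pre-reduced, $(E,\le_r)$ is a meet-semilattice with meet $\wedge$, and there is a function $\cdot:S\times E\to E$ with (I1) for all $t\in S$, $e\in E$, $s\in S$: ($ste=st$ and $sd(t)=s$) iff $s(t\cdot e)=s$; (I2) for $s\in S$, $e,f\in E$: $se=sf=s$ implies $s(e\wedge f)=s$. $C_E(S)=\{(e,s)\in E\times S\mid es=s\}$ with partial product $(e,s)\circ(f,t)=(e,st)$ defined exactly when $sf=s$, and $D((e,s))=(e,e)$; $C^d_E(S)=\{(e,s)\in C_E(S)\mid d(e)=d(s)\}$ with restricted operations. A constellation is a set $P$ with partial binary $\circ$ and unary $D$ such that (C1) if $x\circ(y\circ z)$ exists then so does $(x\circ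 y)\circ z$ and they are equal; (C2) if $x\circ y$ and $y\circ z$ exist then $x\circ(y\circ z)$ exists; (C3) $D(x)$ is the unique right identity $e$ (i.e. $a\circ e=a$ whenever defined) with $e\circ x=x$. Natural quasiorder: $s\le t$ iff $D(s)\circ t$ exists and equals $s$; normal if this is a partial order. $P$ is inductive if it is normal and (O4) for all $e\in D(P)=\{D(x)\mid x\in P\}$ and $a\in P$ there is a largest $x$ (natural order) with $x\le a$ and $x\circ e$ defined, denoted $a|e$ (the co-restriction of $a$ to $e$); (O5) for $x,y\in P$, $e\in D(P)$, if $x\circ y$ exists then $D((x\circ y)|e)=D(x|D(y|e))$. *)

theory Defs
  imports Main
begin

definition semigroup_op :: "('a \<Rightarrow> 'a \<Rightarrow> 'a) \<Rightarrow> bool" where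
  "semigroup_op m \<longleftrightarrow> (\<forall>x y z. m (m x y) z = m x (m y z))"

definition idempotents :: "('a \<Rightarrow> 'a \<Rightarrow> 'a) \<Rightarrow> 'a set" where
  "idempotents m = {e. m e e = e}"

definition le_r :: "('a \<Rightarrow> 'a \<Rightarrow> 'a) \<Rightarrow> 'a \<Rightarrow> 'a \<Rightarrow> bool" where
  "le_r m e f \<longleftrightarrow> e = m e f"

definition right_pre_reduced :: "('a \<Rightarrow> 'a \<Rightarrow> 'a) \<Rightarrow> 'a set \<Rightarrow> bool" where
  "right_pre_reduced m E \<longleftrightarrow> E \<subseteq> idempotents m \<and>
     (\<forall>e\<in>E. \<forall>f\<in>E. e = m e f \<and> f = m f e \<longrightarrow> e = f)"

definition demigroup :: "('a \<Rightarrow> 'a \<Rightarrow> 'a) \<Rightarrow> ('a \<Rightarrow> 'a) \<Rightarrow> bool" where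
  "demigroup m d \<longleftrightarrow> semigroup_op m \<and>
     (\<forall>x. d x \<in> idempotents m) \<and> (\<forall>x. m (d x) x = x) \<and>
     (\<forall>x y. d (m x y) = d (m x (d y)))"

definition E_demigroup :: "('a \<Rightarrow> 'a \<Rightarrow> 'a) \<Rightarrow> ('a \<Rightarrow> 'a) \<Rightarrow> 'a set \<Rightarrow> bool" where
  "E_demigroup m d E \<longleftrightarrow> demigroup m d \<and> E \<subseteq> idempotents m \<and>
     (\<forall>s. d s \<in> E) \<and> (\<forall>e\<in>E. m e (d e) = e)"

definition is_meet_semilattice :: "('a \<Rightarrow> 'a \<Rightarrow> 'a) \<Rightarrow> 'a set \<Rightarrow> ('a \<Rightarrow> 'a \<Rightarrow> 'a) \<Rightarrow> bool" where
  "is_meet_semilattice m E w \<longleftrightarrow>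
     (\<forall>e\<in>E. le_r m e e) \<and>
     (\<forall>e\<in>E. \<forall>f\<in>E. \<forall>g\<in>E. le_r m e f \<and> le_r m f g \<longrightarrow> le_r m e g) \<and>
     (\<forall>e\<in>E. \<forall>f\<in>E. le_r m e f \<and> le_r m f e \<longrightarrow> e = f) \<and>
     (\<forall>e\<in>E. \<forall>f\<in>E. w e f \<in> E \<and> le_r m (w e f) e \<and> le_r m (w e f) f \<and>
        (\<forall>g\<in>E. le_r m g e \<and> le_r m g f \<longrightarrow> le_r m g (w e f)))"

text \<open>Inductive E-demigroup with meet w and associated function dot (written s \<cdot> e = dot s e).\<close>
definition inductive_E_demigroup ::
  "('a \<Rightarrow> 'a \<Rightarrow> 'a) \<Rightarrow> ('a \<Rightarrow> 'a) \<Rightarrow> 'a set \<Rightarrow> ('a \<Rightarrow> 'a \<Rightarrow> 'a) \<Rightarrow> ('a \<Rightarrow> 'a \<Rightarrow> 'a) \<Rightarrow> bool" where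
  "inductive_E_demigroup m d E w dot \<longleftrightarrow>
     E_demigroup m d E \<and> right_pre_reduced m E \<and> is_meet_semilattice m E w \<and>
     (\<forall>t. \<forall>e\<in>E. dot t e \<in> E) \<and>
     (\<forall>t s. \<forall>e\<in>E. (m (m s t) e = m s t \<and> m s (d t) = s) \<longleftrightarrow> m s (dot t e) = s) \<and>
     (\<forall>s. \<forall>e\<in>E. \<forall>f\<in>E. m s e = s \<and> m s f = s \<longrightarrow> m s (w e f) = s)"

text \<open>A partial algebra: carrier P, partial product c (None = undefined), unary D.
  Closure of P under the operations is part of being a partial algebra on P.\<close>

definition defined :: "('b \<Rightarrow> 'b \<Rightarrow> 'b option) \<Rightarrow> 'b \<Rightarrow> 'b \<Rightarrow> bool" where
  "defined c x y \<longleftrightarrow> c x y \<noteq> None"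

definition right_identity :: "'b set \<Rightarrow> ('b \<Rightarrow> 'b \<Rightarrow> 'b option) \<Rightarrow> 'b \<Rightarrow> bool" where
  "right_identity P c e \<longleftrightarrow> e \<in> P \<and> (\<forall>a\<in>P. c a e \<noteq> None \<longrightarrow> c a e = Some a)"

definition constellation :: "'b set \<Rightarrow> ('b \<Rightarrow> 'b \<Rightarrow> 'b option) \<Rightarrow> ('b \<Rightarrow> 'b) \<Rightarrow> bool" where
  "constellation P c D \<longleftrightarrow>
     (\<forall>x\<in>P. \<forall>y\<in>P. \<forall>z. c x y = Some z \<longrightarrow> z \<in> P) \<and>
     (\<forall>x\<in>P. D x \<in> P) \<and>
     \<comment> \<open>(C1)\<close>
     (\<forall>x\<in>P. \<forall>y\<in>P. \<forall>z\<in>P. \<forall>w v. c y z = Some w \<and> c x w = Some v \<longrightarrow>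
        (\<exists>u. c x y = Some u \<and> c u z = Some v)) \<and>
     \<comment> \<open>(C2)\<close>
     (\<forall>x\<in>P. \<forall>y\<in>P. \<forall>z\<in>P. c x y \<noteq> None \<and> c y z \<noteq> None \<longrightarrow>
        (\<exists>w. c y z = Some w \<and> c x w \<noteq> None)) \<and>
     \<comment> \<open>(C3)\<close>
     (\<forall>x\<in>P. right_identity P c (D x) \<and> c (D x) x = Some x \<and>
        (\<forall>e. right_identity P c e \<and> c e x = Some x \<longrightarrow> e = D x))"

definition nat_le :: "('b \<Rightarrow> 'b \<Rightarrow> 'b option) \<Rightarrow> ('b \<Rightarrow> 'b) \<Rightarrow> 'b \<Rightarrow> 'b \<Rightarrow> bool" where
  "nat_le c D s t \<longleftrightarrow> c (D s) t = Some s"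

definition normal_constellation :: "'b set \<Rightarrow> ('b \<Rightarrow> 'b \<Rightarrow> 'b option) \<Rightarrow> ('b \<Rightarrow> 'b) \<Rightarrow> bool" where
  "normal_constellation P c D \<longleftrightarrow> constellation P c D \<and>
     (\<forall>x\<in>P. nat_le c D x x) \<and>
     (\<forall>x\<in>P. \<forall>y\<in>P. \<forall>z\<in>P. nat_le c D x y \<and> nat_le c D y z \<longrightarrow> nat_le c D x z) \<and>
     (\<forall>x\<in>P. \<forall>y\<in>P. nat_le c D x y \<and> nat_le c D y x \<longrightarrow> x = y)"

definition is_corestr :: "'b set \<Rightarrow> ('b \<Rightarrow> 'b \<Rightarrow> 'b option) \<Rightarrow> ('b \<Rightarrow> 'b) \<Rightarrow> 'b \<Rightarrow> 'b \<Rightarrow> 'b \<Rightarrow> bool" where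
  "is_corestr P c D a e x \<longleftrightarrow> x \<in> P \<and> nat_le c D x a \<and> c x e \<noteq> None \<and>
     (\<forall>y\<in>P. nat_le c D y a \<and> c y e \<noteq> None \<longrightarrow> nat_le c D y x)"

definition corestr :: "'b set \<Rightarrow> ('b \<Rightarrow> 'b \<Rightarrow> 'b option) \<Rightarrow> ('b \<Rightarrow> 'b) \<Rightarrow> 'b \<Rightarrow> 'b \<Rightarrow> 'b" where
  "corestr P c D a e = (THE x. is_corestr P c D a e x)"

definition inductive_constellation :: "'b set \<Rightarrow> ('b \<Rightarrow> 'b \<Rightarrow> 'b option) \<Rightarrow> ('b \<Rightarrow> 'b) \<Rightarrow> bool" where
  "inductive_constellation P c D \<longleftrightarrow> normal_constellation P c D \<and>
     \<comment> \<open>(O4)\<close>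
     (\<forall>e\<in>D ` P. \<forall>a\<in>P. \<exists>x. is_corestr P c D a e x) \<and>
     \<comment> \<open>(O5)\<close>
     (\<forall>x\<in>P. \<forall>y\<in>P. \<forall>e\<in>D ` P. \<forall>z. c x y = Some z \<longrightarrow>
        D (corestr P c D z e) = D (corestr P c D x (D (corestr P c D y e))))"

definition CE :: "('a \<Rightarrow> 'a \<Rightarrow> 'a) \<Rightarrow> 'a set \<Rightarrow> ('a \<times> 'a) set" where
  "CE m E = {(e, s). e \<in> E \<and> m e s = s}"

definition CdE :: "('a \<Rightarrow> 'a \<Rightarrow> 'a) \<Rightarrow> ('a \<Rightarrow> 'a) \<Rightarrow> 'a set \<Rightarrow> ('a \<times> 'a) set" where
  "CdE m d E = {(e, s) \<in> CE m E. d e = d s}"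

definition C_comp :: "('a \<Rightarrow> 'a \<Rightarrow> 'a) \<Rightarrow> 'a \<times> 'a \<Rightarrow> 'a \<times> 'a \<Rightarrow> ('a \<times> 'a) option" where
  "C_comp m x y = (case x of (e, s) \<Rightarrow> case y of (f, t) \<Rightarrow>
      if m s f = s then Some (e, m s t) else None)"

definition C_D :: "'a \<times> 'a \<Rightarrow> 'a \<times> 'a" where
  "C_D x = (fst x, fst x)"

end

theory Submission imports Defs begin

text \<open>The right fixers of the meet f \<and> (s \<cdot> e) are, by (I1) and (I2), exactly the b with
  bf = b and (bs)e = bs, i.e. the first components of the elements below (f,s) that compose
  with (e,e); so (f \<and> (s \<cdot> e), (f \<and> (s \<cdot> e))s) is the largest such element. For (O5) one shows
  that st \<cdot> e and s \<cdot> (b \<and> (t \<cdot> e)) have the same right fixers whenever (e',s) \<circ> (b,t) is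
  defined; as E is right pre-reduced, they are then equal.\<close>

lemma C_comp_Pair [simp]:
  "C_comp m (a, s) (b, t) = (if m s b = s then Some (a, m s t) else None)"
  by (simp add: C_comp_def)

lemma C_D_Pair [simp]: "C_D (a, s) = (a, a)"
  by (simp add: C_D_def)

lemma nat_le_C_Pair_iff: "nat_le (C_comp m) C_D (a, s) (b, t) \<longleftrightarrow> m a b = a \<and> m a t = s"
  by (auto simp: nat_le_def)

lemma CdE_Pair_iff: "(a, s) \<in> CdE m d E \<longleftrightarrow> a \<in> E \<and> m a s = s \<and> d a = d s"
  by (simp add: CdE_def CE_def)

lemma corestr_eqI:
  assumes "\<forall>x\<in>P. \<forall>y\<in>P. nat_le c D x y \<and> nat_le c D y x \<longrightarrow> x = y"
    and "is_corestr P c D a e x"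
  shows "corestr P c D a e = x"
  using assms unfolding corestr_def is_corestr_def by (intro the_equality) blast+

locale inductive_E_demigroup_on =
  fixes m :: "'a \<Rightarrow> 'a \<Rightarrow> 'a" and d :: "'a \<Rightarrow> 'a" and E :: "'a set"
    and w :: "'a \<Rightarrow> 'a \<Rightarrow> 'a" and dot :: "'a \<Rightarrow> 'a \<Rightarrow> 'a"
  assumes assoc: "m (m x y) z = m x (m y z)"
    and idem: "e \<in> E \<Longrightarrow> m e e = e"
    and d_mult_d: "d (m x y) = d (m x (d y))"
    and E_mult_d: "e \<in> E \<Longrightarrow> m e (d e) = e"
    and E_antisym: "e \<in> E \<Longrightarrow> f \<in> E \<Longrightarrow> m e f = e \<Longrightarrow> m f e = f \<Longrightarrow> e = f"
    and meet_in_E: "e \<in> E \<Longrightarrow> f \<in> E \<Longrightarrow> w e f \<in> E"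
    and meet_le_left: "e \<in> E \<Longrightarrow> f \<in> E \<Longrightarrow> m (w e f) e = w e f"
    and meet_le_right: "e \<in> E \<Longrightarrow> f \<in> E \<Longrightarrow> m (w e f) f = w e f"
    and dot_in_E: "e \<in> E \<Longrightarrow> dot t e \<in> E"
    and right_fix_dot_iff:
      "e \<in> E \<Longrightarrow> m x (dot t e) = x \<longleftrightarrow> m (m x t) e = m x t \<and> m x (d t) = x"
    and right_fix_meetI: "e \<in> E \<Longrightarrow> f \<in> E \<Longrightarrow> m x e = x \<Longrightarrow> m x f = x \<Longrightarrow> m x (w e f) = x"
begin

abbreviation P :: "('a \<times> 'a) set" where "P \<equiv> CdE m d E"

lemma right_fix_meet_iff:
  assumes "e \<in> E" "f \<in> E"
  shows "m x (w e f) = x \<longleftrightarrow> m x e = x \<and> m x f = x"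
proof
  assume x: "m x (w e f) = x"
  show "m x e = x \<and> m x f = x"
    using meet_le_left[OF assms] meet_le_right[OF assms] by (metis x assoc)
next
  assume "m x e = x \<and> m x f = x"
  then show "m x (w e f) = x"
    using right_fix_meetI assms by blast
qed

lemma E_eqI:
  assumes "e \<in> E" "f \<in> E" and same_fixers: "\<And>x. m x e = x \<longleftrightarrow> m x f = x"
  shows "e = f"
proof -
  have "m e f = e" "m f e = f"
    using same_fixers idem assms(1,2) by blast+
  then show ?thesis
    using E_antisym assms(1,2) by blast
qed

lemma d_mult_eq: "m s (d t) = s \<Longrightarrow> d (m s t) = d s"
  by (metis d_mult_d)

lemma right_fix_d_of_CdE: "(f, s) \<in> P \<Longrightarrow> m b f = b \<Longrightarrow> m b (d s) = b"
  using E_mult_d by (metis CdE_Pair_iff assoc)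

lemma CdE_comp_closed:
  assumes "(a, s) \<in> P" "(b, t) \<in> P" "m s b = s"
  shows "(a, m s t) \<in> P"
proof -
  have "m s (d t) = s"
    using right_fix_d_of_CdE assms(2,3) .
  then have "d (m s t) = d s"
    by (rule d_mult_eq)
  then show ?thesis
    using assms(1) by (auto simp: CdE_Pair_iff assoc[symmetric])
qed

lemma CdE_mult_left_closed:
  assumes "(f, s) \<in> P" "h \<in> E" "m h (d s) = h"
  shows "(h, m h s) \<in> P"
  using assms d_mult_eq[OF assms(3)] idem by (simp add: CdE_Pair_iff assoc[symmetric])

lemma below_composable_iff:
  assumes "(f, s) \<in> P" "g \<in> E"
  shows "nat_le (C_comp m) C_D (b, r) (f, s) \<and> C_comp m (b, r) (g, g) \<noteq> None
    \<longleftrightarrow> m b (w f (dot s g)) = b \<and> r = m b s"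
proof -
  have "f \<in> E"
    using assms(1) by (simp add: CdE_Pair_iff)
  moreover have "m b f = b \<Longrightarrow> m b (d s) = b"
    using right_fix_d_of_CdE assms(1) .
  ultimately show ?thesis
    using assms(2) by (auto simp: nat_le_C_Pair_iff right_fix_meet_iff dot_in_E right_fix_dot_iff)
qed

lemma is_corestr_CdE:
  assumes fs: "(f, s) \<in> P" and g: "g \<in> E"
  shows "is_corestr P (C_comp m) C_D (f, s) (g, g) (w f (dot s g), m (w f (dot s g)) s)"
proof -
  define h where "h = w f (dot s g)"
  have f: "f \<in> E"
    using fs by (simp add: CdE_Pair_iff)
  have h: "h \<in> E"
    unfolding h_def using meet_in_E f dot_in_E g by blast
  have h_below: "nat_le (C_comp m) C_D (h, m h s) (f, s) \<and> C_comp m (h, m h s) (g, g) \<noteq> None"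
    using below_composable_iff[OF fs g] idem[OF h] h_def by simp
  have "m h (d s) = h"
    using h_below right_fix_d_of_CdE[OF fs] by (simp add: nat_le_C_Pair_iff)
  then have "(h, m h s) \<in> P"
    using CdE_mult_left_closed[OF fs h] by simp
  moreover have "nat_le (C_comp m) C_D y (h, m h s)"
    if "nat_le (C_comp m) C_D y (f, s) \<and> C_comp m y (g, g) \<noteq> None" for y
    using that below_composable_iff[OF fs g, of "fst y" "snd y"]
    by (cases y) (simp add: nat_le_C_Pair_iff h_def assoc[symmetric])
  ultimately show ?thesis
    using h_below unfolding is_corestr_def h_def by blast
qed

lemma nat_le_antisym_CdE:
  "x \<in> P \<Longrightarrow> y \<in> P \<Longrightarrow> nat_le (C_comp m) C_D x y \<Longrightarrow> nat_le (C_comp m) C_D y x \<Longrightarrow> x = y"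
proof (cases x, cases y)
  fix a s b t
  assume "x \<in> P" "y \<in> P" "nat_le (C_comp m) C_D x y" "nat_le (C_comp m) C_D y x"
    and xy: "x = (a, s)" "y = (b, t)"
  then have "a \<in> E" "b \<in> E" "m a b = a" "m b a = b" "m a t = s" "m b s = t"
    by (simp_all add: nat_le_C_Pair_iff CdE_Pair_iff)
  then have "a = b" "s = t"
    using E_antisym by (metis, metis assoc idem)
  then show "x = y"
    using xy by simp
qed

lemma corestr_CdE:
  "(f, s) \<in> P \<Longrightarrow> g \<in> E \<Longrightarrow>
    corestr P (C_comp m) C_D (f, s) (g, g) = (w f (dot s g), m (w f (dot s g)) s)"
  by (rule corestr_eqI[OF _ is_corestr_CdE]) (use nat_le_antisym_CdE in blast)+

lemma dot_mult:
  assumes g: "g \<in> E" and b: "b \<in> E" and sb: "m s b = s" and sdt: "m s (d t) = s"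
  shows "dot (m s t) g = dot s (w b (dot t g))"
proof (rule E_eqI)
  have k: "w b (dot t g) \<in> E"
    using meet_in_E b dot_in_E g by blast
  then show "dot (m s t) g \<in> E" "dot s (w b (dot t g)) \<in> E"
    using dot_in_E g by blast+
  fix x
  have "m (m x s) (dot t g) = m x s \<longleftrightarrow> m (m (m x s) t) g = m (m x s) t"
    using right_fix_dot_iff[OF g, of "m x s" t] sdt by (simp add: assoc)
  moreover have "m (m x s) (w b (dot t g)) = m x s \<longleftrightarrow> m (m x s) (dot t g) = m x s"
    using right_fix_meet_iff[OF b dot_in_E[OF g], of "m x s" t] sb by (simp add: assoc)
  ultimately show "m x (dot (m s t) g) = x \<longleftrightarrow> m x (dot s (w b (dot t g))) = x"
    using right_fix_dot_iff[OF g, of x "m s t"] right_fix_dot_iff[OF k, of x s] d_mult_eq[OF sdt]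
    by (simp add: assoc)
qed

lemma constellation_CdE: "constellation P (C_comp m) C_D"
  unfolding constellation_def
proof (intro conjI ballI allI impI)
  fix x y z
  assume "x \<in> P" "y \<in> P" "C_comp m x y = Some z"
  then show "z \<in> P"
    using CdE_comp_closed by (cases x, cases y) (auto split: if_splits)
next
  fix x
  assume "x \<in> P"
  then show "C_D x \<in> P"
    by (cases x) (auto simp: CdE_Pair_iff idem)
next
  fix x y z u v
  assume "C_comp m y z = Some u \<and> C_comp m x u = Some v"
  then show "\<exists>u. C_comp m x y = Some u \<and> C_comp m u z = Some v"
    by (cases x, cases y, cases z) (auto split: if_splits simp: assoc)
next
  fix x y z
  assume "C_comp m x y \<noteq> None \<and> C_comp m y z \<noteq> None"
  then show "\<exists>u. C_comp m y z = Some u \<and> C_comp m x u \<noteq> None"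
    by (cases x, cases y, cases z) (auto split: if_splits)
next
  fix x
  assume x: "x \<in> P"
  obtain a s where x_def: "x = (a, s)"
    by (cases x)
  have a: "a \<in> E" "m a s = s"
    using x x_def by (auto simp: CdE_Pair_iff)
  have aa: "(a, a) \<in> P"
    using a idem by (simp add: CdE_Pair_iff)
  show "right_identity P (C_comp m) (C_D x)"
    unfolding right_identity_def using x_def aa by (auto split: if_splits)
  show "C_comp m (C_D x) x = Some x"
    using x_def a idem by simp
  fix e
  assume e: "right_identity P (C_comp m) e \<and> C_comp m e x = Some x"
  obtain b r where e_def: "e = (b, r)"
    by (cases e)
  have "b = a" "m a r = r"
    using e e_def x_def by (auto simp: right_identity_def CdE_Pair_iff split: if_splits)
  moreover have "C_comp m (a, a) e = Some (a, a)"
    using e aa e_def \<open>b = a\<close> idem[OF a(1)] unfolding right_identity_def by auto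
  ultimately show "e = C_D x"
    using e_def x_def by (simp split: if_splits)
qed

lemma normal_constellation_CdE: "normal_constellation P (C_comp m) C_D"
  unfolding normal_constellation_def
proof (intro conjI ballI impI constellation_CdE)
  fix x
  assume "x \<in> P"
  then show "nat_le (C_comp m) C_D x x"
    by (cases x) (auto simp: nat_le_C_Pair_iff CdE_Pair_iff idem)
next
  fix x y z
  assume "nat_le (C_comp m) C_D x y \<and> nat_le (C_comp m) C_D y z"
  then show "nat_le (C_comp m) C_D x z"
    by (cases x, cases y, cases z) (simp add: nat_le_C_Pair_iff, metis assoc)
qed (use nat_le_antisym_CdE in blast)

lemma C_D_image_CdE: "e \<in> C_D ` P \<Longrightarrow> \<exists>g\<in>E. e = (g, g)"
  by (auto simp: CdE_Pair_iff C_D_def)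

lemma corestr_mult_CdE:
  assumes x: "(a, s) \<in> P" and y: "(b, t) \<in> P" and g: "g \<in> E" and sb: "m s b = s"
  shows "C_D (corestr P (C_comp m) C_D (a, m s t) (g, g))
    = C_D (corestr P (C_comp m) C_D (a, s) (C_D (corestr P (C_comp m) C_D (b, t) (g, g))))"
proof -
  have b: "b \<in> E"
    using y by (simp add: CdE_Pair_iff)
  have "w b (dot t g) \<in> E"
    using meet_in_E b dot_in_E g by blast
  moreover have "dot (m s t) g = dot s (w b (dot t g))"
    using dot_mult[OF g b sb right_fix_d_of_CdE[OF y sb]] .
  ultimately show ?thesis
    using x y g CdE_comp_closed[OF x y sb] by (simp add: corestr_CdE)
qed

lemma inductive_constellation_CdE: "inductive_constellation P (C_comp m) C_D"
  unfolding inductive_constellation_def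
proof (intro conjI ballI allI impI normal_constellation_CdE)
  fix e x
  assume "e \<in> C_D ` P" "x \<in> P"
  then obtain g f s where "g \<in> E" "e = (g, g)" "x = (f, s)" "(f, s) \<in> P"
    using C_D_image_CdE by (cases x) blast
  then show "\<exists>z. is_corestr P (C_comp m) C_D x e z"
    using is_corestr_CdE by blast
next
  fix x y e z
  assume "x \<in> P" "y \<in> P" "e \<in> C_D ` P" and xy: "C_comp m x y = Some z"
  then obtain g a s b t where "g \<in> E" "e = (g, g)" "x = (a, s)" "y = (b, t)"
      "(a, s) \<in> P" "(b, t) \<in> P"
    using C_D_image_CdE by (cases x, cases y) blast
  moreover from xy this(3,4) have "m s b = s" "z = (a, m s t)"
    by (simp_all split: if_splits)
  ultimately show "C_D (corestr P (C_comp m) C_D z e)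
    = C_D (corestr P (C_comp m) C_D x (C_D (corestr P (C_comp m) C_D y e)))"
    using corestr_mult_CdE by simp
qed

end

lemma inductive_E_demigroup_on_if_inductive:
  assumes "inductive_E_demigroup m d E w dot"
  shows "inductive_E_demigroup_on m d E w dot"
proof -
  have "E_demigroup m d E" "right_pre_reduced m E" "is_meet_semilattice m E w"
    "\<forall>t. \<forall>e\<in>E. dot t e \<in> E"
    "\<forall>t s. \<forall>e\<in>E. (m (m s t) e = m s t \<and> m s (d t) = s) \<longleftrightarrow> m s (dot t e) = s"
    "\<forall>s. \<forall>e\<in>E. \<forall>f\<in>E. m s e = s \<and> m s f = s \<longrightarrow> m s (w e f) = s"
    using assms unfolding inductive_E_demigroup_def by blast+
  then show ?thesis
    unfolding inductive_E_demigroup_on_def E_demigroup_def demigroup_def semigroup_op_def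
      idempotents_def right_pre_reduced_def is_meet_semilattice_def le_r_def
    by (intro conjI allI impI; metis)
qed

theorem proposition3p7:
  fixes m :: "'a \<Rightarrow> 'a \<Rightarrow> 'a" and d :: "'a \<Rightarrow> 'a" and E :: "'a set"
    and w :: "'a \<Rightarrow> 'a \<Rightarrow> 'a" and dot :: "'a \<Rightarrow> 'a \<Rightarrow> 'a"
  assumes "inductive_E_demigroup m d E w dot"
  shows "inductive_constellation (CdE m d E) (C_comp m) C_D \<and>
         (\<forall>f s e. (f, s) \<in> CdE m d E \<and> e \<in> E \<longrightarrow>
            corestr (CdE m d E) (C_comp m) C_D (f, s) (e, e) = (w f (dot s e), m (w f (dot s e)) s))"
proof -
  interpret inductive_E_demigroup_on m d E w dot
    using assms by (rule inductive_E_demigroup_on_if_inductive)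
  show ?thesis
    using inductive_constellation_CdE corestr_CdE by blast
qed

end
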